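(* Let $N\ge1$ be an integer, $k>0$, $r>0$, $\alpha>0$ with $\alpha/r<\mu^*$. Let $\widetilde U^{\mathrm{eq}}=(x^{\mathrm{eq}},M_0^{\mathrm{eq}},M_1^{\mathrm{eq}},\dots)\in X_+$ be an equilibrium of the infinite system (S) below such that the corresponding equilibrium $U^{\mathrm{eq}}=(x^{\mathrm{eq}},u^{\mathrm{eq}},v^{\mathrm{eq}},w^{\mathrm{eq}},M_0^{\mathrm{eq}},\dots,M_N^{\mathrm{eq}})$ of the $(N+5)$-dimensional system $\dot U=F(U)$ is locally exponentially asymptotically stable. Then $\widetilde U^{\mathrm{eq}}$ is a locally asymptotically stable solution of (S) in the strong topology of $X$.
   Context: System (S): for $t\ge0$, $\dot M_0=r-kxM_0-M_0$, $\dot M_i=kxM_{i-1}-kxM_i-M_i$ ($i\ge1$), $\dot x=\alpha-kx\sum_{i=0}^\infty M_i+\sum_{i=N+1}^\infty iM_i$. $X$ is the Banach space of real sequences $(x,M_0,M_1,\dots)$ with norm $\|(x,M_0,M_1,\dots)\|=|x|+\sum_{i\ge0}(i+1)|M_i|<\infty$, and $X_+$ its nonnegative cone; solutions of (S) are the nonnegative solutions with values in $X_+$ (for which the Cauchy problem is well posed). To $(x,M_0,M_1,\dots)\in X_+$ corresponds $(x,u,v,w,M_0,\dots,M_N)\in\mathbb{R}^{N+5}$ with $u=\sum_{i\ge0}M_i$, $v=\sum_{i\ge N+1}iM_i$, $w=\sum_{i\ge N}M_i$. The map $F:\mathbb{R}^{N+5}\to\mathbb{R}^{N+5}$ (variables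 $U_1=x,U_2=u,U_3=v,U_4=w,U_{5+i}=M_i$) is $F_1=\alpha+U_3-kU_1U_2$, $F_2=r-U_2$, $F_3=-U_3+kU_1U_4+NkU_1U_{N+5}$, $F_4=-U_4+kU_1U_{N+4}$, $F_5=r-U_5-kU_1U_5$, $F_j=-U_j+kU_1U_{j-1}-kU_1U_j$ ($6\le j\le N+5$). Finally $\mu^*:=\widetilde{\mathcal F}_N(y^* )$, where $\widetilde{\mathcal F}_N(y)=\frac{y}{1-y}(1-(N+1)y^N+Ny^{N+1})$ and $y^*$ is the unique zero in $(0,1)$ of $p_N(y)=1-(N+1)^2y^N+N(2N+3)y^{N+1}-N(N+1)y^{N+2}$; (S) has equilibria in $X_+$ iff $\alpha/r\le\mu^*$. *)

theory Defs
  imports "HOL-Analysis.Analysis"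
begin

definition pN :: "nat \<Rightarrow> real \<Rightarrow> real" where
  "pN N y = 1 - (real N + 1)^2 * y^N + real N * (2 * real N + 3) * y^(N+1)
            - real N * (real N + 1) * y^(N+2)"

definition FtildeN :: "nat \<Rightarrow> real \<Rightarrow> real" where
  "FtildeN N y = y / (1 - y) * (1 - (real N + 1) * y^N + real N * y^(N+1))"

definition ystar :: "nat \<Rightarrow> real" where
  "ystar N = (THE y. 0 < y \<and> y < 1 \<and> pN N y = 0)"

definition mustar :: "nat \<Rightarrow> real" where
  "mustar N = FtildeN N (ystar N)"

definition inX :: "(nat \<Rightarrow> real) \<Rightarrow> bool" where
  "inX M \<longleftrightarrow> summable (\<lambda>i. (real i + 1) * \<bar>M i\<bar>)"

definition Xnorm :: "real \<Rightarrow> (nat \<Rightarrow> real) \<Rightarrow> real" where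
  "Xnorm x M = \<bar>x\<bar> + (\<Sum>i. (real i + 1) * \<bar>M i\<bar>)"

definition inXplus :: "real \<Rightarrow> (nat \<Rightarrow> real) \<Rightarrow> bool" where
  "inXplus x M \<longleftrightarrow> x \<ge> 0 \<and> (\<forall>i. M i \<ge> 0) \<and> inX M"

definition Xdist :: "real \<Rightarrow> (nat \<Rightarrow> real) \<Rightarrow> real \<Rightarrow> (nat \<Rightarrow> real) \<Rightarrow> real" where
  "Xdist x M y L = Xnorm (x - y) (\<lambda>i. M i - L i)"

definition S_rhs_x :: "nat \<Rightarrow> real \<Rightarrow> real \<Rightarrow> real \<Rightarrow> (nat \<Rightarrow> real) \<Rightarrow> real" where
  "S_rhs_x N k \<alpha> x M = \<alpha> - k * x * (\<Sum>i. M i) + (\<Sum>i. if N + 1 \<le> i then real i * M i else 0)"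

definition S_rhs_M :: "real \<Rightarrow> real \<Rightarrow> real \<Rightarrow> (nat \<Rightarrow> real) \<Rightarrow> nat \<Rightarrow> real" where
  "S_rhs_M k r x M i =
     (if i = 0 then r - k * x * M 0 - M 0
      else k * x * M (i - 1) - k * x * M i - M i)"

definition S_equilibrium :: "nat \<Rightarrow> real \<Rightarrow> real \<Rightarrow> real \<Rightarrow> real \<Rightarrow> (nat \<Rightarrow> real) \<Rightarrow> bool" where
  "S_equilibrium N k r \<alpha> x M \<longleftrightarrow>
     inXplus x M \<and> S_rhs_x N k \<alpha> x M = 0 \<and> (\<forall>i. S_rhs_M k r x M i = 0)"

definition S_solution :: "nat \<Rightarrow> real \<Rightarrow> real \<Rightarrow> real \<Rightarrow> (real \<Rightarrow> real) \<Rightarrow> (real \<Rightarrow> nat \<Rightarrow> real) \<Rightarrow> bool" where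
  "S_solution N k r \<alpha> xs Ms \<longleftrightarrow>
     (\<forall>t\<ge>0. inXplus (xs t) (Ms t)) \<and>
     (\<forall>t\<ge>0. ((\<lambda>s. Xdist (xs s) (Ms s) (xs t) (Ms t)) \<longlongrightarrow> 0) (at t within {0..})) \<and>
     (\<forall>t\<ge>0. (xs has_real_derivative S_rhs_x N k \<alpha> (xs t) (Ms t)) (at t within {0..})) \<and>
     (\<forall>t\<ge>0. \<forall>i. ((\<lambda>s. Ms s i) has_real_derivative S_rhs_M k r (xs t) (Ms t) i) (at t within {0..}))"

definition S_locally_asymptotically_stable ::
  "nat \<Rightarrow> real \<Rightarrow> real \<Rightarrow> real \<Rightarrow> real \<Rightarrow> (nat \<Rightarrow> real) \<Rightarrow> bool" where
  "S_locally_asymptotically_stable N k r \<alpha> xe Me \<longleftrightarrow>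
     (\<forall>\<epsilon>>0. \<exists>\<delta>>0. \<forall>xs Ms. S_solution N k r \<alpha> xs Ms \<and> Xdist (xs 0) (Ms 0) xe Me < \<delta> \<longrightarrow>
        (\<forall>t\<ge>0. Xdist (xs t) (Ms t) xe Me < \<epsilon>)) \<and>
     (\<exists>\<delta>>0. \<forall>xs Ms. S_solution N k r \<alpha> xs Ms \<and> Xdist (xs 0) (Ms 0) xe Me < \<delta> \<longrightarrow>
        ((\<lambda>t. Xdist (xs t) (Ms t) xe Me) \<longlongrightarrow> 0) at_top)"

text \<open>Vectors of R^(N+5) are represented as functions nat => real, with the relevant
  components U 1, ..., U (N+5) (indices as in the paper: U_1 = x, U_2 = u, U_3 = v,
  U_4 = w, U_(5+i) = M_i).\<close>

definition F :: "nat \<Rightarrow> real \<Rightarrow> real \<Rightarrow> real \<Rightarrow> (nat \<Rightarrow> real) \<Rightarrow> nat \<Rightarrow> real" where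
  "F N k r \<alpha> U j =
     (if j = 1 then \<alpha> + U 3 - k * U 1 * U 2
      else if j = 2 then r - U 2
      else if j = 3 then - U 3 + k * U 1 * U 4 + real N * k * U 1 * U (N + 5)
      else if j = 4 then - U 4 + k * U 1 * U (N + 4)
      else if j = 5 then r - U 5 - k * U 1 * U 5
      else if 6 \<le> j \<and> j \<le> N + 5 then - U j + k * U 1 * U (j - 1) - k * U 1 * U j
      else 0)"

definition fdist :: "nat \<Rightarrow> (nat \<Rightarrow> real) \<Rightarrow> (nat \<Rightarrow> real) \<Rightarrow> real" where
  "fdist N U V = (\<Sum>j\<in>{1..N+5}. \<bar>U j - V j\<bar>)"

definition F_solution_on :: "nat \<Rightarrow> real \<Rightarrow> real \<Rightarrow> real \<Rightarrow> real \<Rightarrow> (real \<Rightarrow> nat \<Rightarrow> real) \<Rightarrow> bool" where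
  "F_solution_on N k r \<alpha> T U \<longleftrightarrow>
     (\<forall>t\<in>{0..<T}. \<forall>j\<in>{1..N+5}.
        ((\<lambda>s. U s j) has_real_derivative F N k r \<alpha> (U t) j) (at t within {0..<T}))"

definition F_locally_exp_stable :: "nat \<Rightarrow> real \<Rightarrow> real \<Rightarrow> real \<Rightarrow> (nat \<Rightarrow> real) \<Rightarrow> bool" where
  "F_locally_exp_stable N k r \<alpha> Ue \<longleftrightarrow>
     (\<exists>\<delta>>0. \<exists>C lam. lam > 0 \<and>
        (\<forall>T>0. \<forall>U. F_solution_on N k r \<alpha> T U \<and> fdist N (U 0) Ue < \<delta> \<longrightarrow>
           (\<forall>t\<in>{0..<T}. fdist N (U t) Ue \<le> C * exp (- lam * t) * fdist N (U 0) Ue)))"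

definition reduce :: "nat \<Rightarrow> real \<Rightarrow> (nat \<Rightarrow> real) \<Rightarrow> nat \<Rightarrow> real" where
  "reduce N x M j =
     (if j = 1 then x
      else if j = 2 then (\<Sum>i. M i)
      else if j = 3 then (\<Sum>i. if N + 1 \<le> i then real i * M i else 0)
      else if j = 4 then (\<Sum>i. if N \<le> i then M i else 0)
      else if 5 \<le> j \<and> j \<le> N + 5 then M (j - 5)
      else 0)"

end

theory Submission
  imports Defs
begin

text \<open>Reduction maps solutions of (S) to solutions of \<open>U' = F(U)\<close>: a solution is continuous
  in \<open>X\<close>, so its moments \<open>u, v, w\<close> can be differentiated termwise, and summation by parts
  turns the derivatives into the components of \<open>F\<close>. The hypothesis then makes \<open>x\<close> and the
  reduced coordinates decay like \<open>exp (-\<mu> t)\<close> for some \<open>\<mu> < 1\<close>. Each deviation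
  \<open>M\<^sub>i - M\<^sub>i\<^sup>e\<^sup>q\<close> solves a linear equation damped at rate \<open>k x + 1 \<ge> 1\<close> and forced by
  the deviations of \<open>x\<close> and \<open>M\<^sub>i\<^sub>-\<^sub>1\<close>, so by induction every component decays at the
  same rate. Finally, as \<open>M \<ge> 0\<close>, the distance in \<open>X\<close> is bounded by reduced coordinates,
  finitely many components and a tail of \<open>M\<^sup>e\<^sup>q\<close>, which can be made small uniformly.\<close>

section \<open>Linear differential inequalities\<close>

lemma deriv_nonpos_where_pos_imp_nonpos:
  fixes w w' :: "real \<Rightarrow> real"
  assumes deriv: "\<And>s. s \<ge> 0 \<Longrightarrow> (w has_real_derivative w' s) (at s within {0..})"
    and start: "w 0 \<le> 0"
    and deriv_nonpos: "\<And>s. s > 0 \<Longrightarrow> w s > 0 \<Longrightarrow> w' s \<le> 0"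
    and t: "t \<ge> 0"
  shows "w t \<le> 0"
proof (rule ccontr)
  assume "\<not> w t \<le> 0"
  hence wt_pos: "w t > 0" by simp
  have "continuous_on {0..} w"
    by (rule DERIV_continuous_on[OF deriv]) auto
  hence cont: "continuous_on {0..t} w"
    by (rule continuous_on_subset) auto
  define Z where "Z = {0..t} \<inter> w -` {..0}"
  have "closed Z"
    unfolding Z_def by (rule continuous_closed_preimage[OF cont]) auto
  moreover have "0 \<in> Z" and bdd: "bdd_above Z"
    using start t unfolding Z_def by auto
  ultimately have "Sup Z \<in> Z"
    using closed_contains_Sup by blast
  define s0 where "s0 = Sup Z"
  have s0: "0 \<le> s0" "s0 < t" "w s0 \<le> 0"
    using \<open>Sup Z \<in> Z\<close> wt_pos unfolding s0_def Z_def by (auto simp: order_le_less)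
  have pos_after: "w z > 0" if "s0 < z" "z \<le> t" for z
    using cSup_upper[OF _ bdd, of z] that s0 unfolding s0_def Z_def by force
  have deriv_at: "(w has_real_derivative w' z) (at z)" if "z > 0" for z
  proof -
    have "(w has_real_derivative w' z) (at z within {0<..})"
      by (rule DERIV_subset[OF deriv]) (use that in auto)
    thus ?thesis using at_within_open[of z "{0<..}"] that by simp
  qed
  have "continuous_on {s0..t} w"
    using cont by (rule continuous_on_subset) (use s0 in auto)
  moreover have "w differentiable (at z)" if "s0 < z" for z
    using deriv_at[of z] that s0 real_differentiable_def by auto
  ultimately obtain l z where z: "s0 < z" "z < t" "DERIV w z :> l" and mvt: "w t - w s0 = (t - s0) * l"
    using MVT[OF \<open>s0 < t\<close>] by blast
  have "l = w' z"
    using DERIV_unique[OF z(3) deriv_at] z s0 by simp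
  also have "w' z \<le> 0"
    using deriv_nonpos[of z] pos_after[of z] z s0 by auto
  finally have "(t - s0) * l \<le> 0"
    using \<open>s0 < t\<close> by (simp add: mult_nonneg_nonpos)
  hence "w t \<le> w s0"
    using mvt by linarith
  thus False using s0 wt_pos by simp
qed

text \<open>Comparison with the supersolution \<open>B exp (-\<mu> s)\<close>, applied to \<open>y\<close> and to \<open>-y\<close>.\<close>

lemma linear_ode_exp_decay:
  fixes y a g :: "real \<Rightarrow> real"
  assumes deriv: "\<And>s. s \<ge> 0 \<Longrightarrow> (y has_real_derivative (- a s * y s + g s)) (at s within {0..})"
    and damping: "\<And>s. s \<ge> 0 \<Longrightarrow> a s \<ge> 1"
    and forcing: "\<And>s. s \<ge> 0 \<Longrightarrow> \<bar>g s\<bar> \<le> A * exp (- \<mu> * s)"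
    and \<mu>: "0 < \<mu>" "\<mu> < 1"
    and t: "t \<ge> 0"
  shows "\<bar>y t\<bar> \<le> (\<bar>y 0\<bar> + A / (1 - \<mu>)) * exp (- \<mu> * t)"
proof -
  define B where "B = \<bar>y 0\<bar> + A / (1 - \<mu>)"
  have "A \<ge> 0" using forcing[of 0] by simp
  have "(1 - \<mu>) * B = (1 - \<mu>) * \<bar>y 0\<bar> + A"
    using \<mu> unfolding B_def by (simp add: field_simps)
  hence B: "B \<ge> 0" "A \<le> (1 - \<mu>) * B"
    using \<mu> \<open>A \<ge> 0\<close> unfolding B_def by auto
  have "\<sigma> * y t - B * exp (- \<mu> * t) \<le> 0" if \<sigma>: "\<bar>\<sigma>\<bar> = 1" for \<sigma> :: real
  proof (rule deriv_nonpos_where_pos_imp_nonpos[OF _ _ _ t])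
    fix s :: real assume "s \<ge> 0"
    show "((\<lambda>s. \<sigma> * y s - B * exp (- \<mu> * s)) has_real_derivative
        \<sigma> * (- a s * y s + g s) - - \<mu> * (B * exp (- \<mu> * s))) (at s within {0..})"
      by (intro DERIV_diff DERIV_cmult deriv[OF \<open>s \<ge> 0\<close>]) (auto intro!: derivative_eq_intros)
  next
    show "\<sigma> * y 0 - B * exp (- \<mu> * 0) \<le> 0"
    proof -
      have "\<sigma> * y 0 \<le> \<bar>y 0\<bar>" using \<sigma> by (auto simp: abs_if split: if_splits)
      moreover have "A / (1 - \<mu>) \<ge> 0" using \<open>A \<ge> 0\<close> \<mu> by simp
      ultimately show ?thesis unfolding B_def by simp
    qed
  next
    fix s :: real assume "s > 0" and above: "\<sigma> * y s - B * exp (- \<mu> * s) > 0"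
    define e where "e = exp (- \<mu> * s)"
    have "e > 0" unfolding e_def by simp
    have "\<sigma> * y s \<ge> 0"
      using above mult_nonneg_nonneg[OF B(1) less_imp_le[OF \<open>e > 0\<close>]] unfolding e_def by linarith
    have "1 * (\<sigma> * y s) \<le> a s * (\<sigma> * y s)"
      using mult_right_mono[OF damping \<open>\<sigma> * y s \<ge> 0\<close>] \<open>s > 0\<close> by simp
    moreover have "\<sigma> * g s \<le> A * e"
      using abs_ge_self[of "\<sigma> * g s"] forcing[of s] \<open>s > 0\<close> \<sigma> unfolding e_def abs_mult by simp
    moreover have "A * e \<le> (1 - \<mu>) * B * e"
      using mult_right_mono[OF B(2) less_imp_le[OF \<open>e > 0\<close>]] .
    ultimately show "\<sigma> * (- a s * y s + g s) - - \<mu> * (B * exp (- \<mu> * s)) \<le> 0"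
      using above unfolding e_def[symmetric] by (simp add: algebra_simps)
  qed
  from this[of 1] this[of "-1"] show ?thesis
    unfolding B_def by (simp add: abs_le_iff)
qed

section \<open>The weighted space X\<close>

lemma inX_summable_weighted:
  assumes "inX M" and "\<And>i. \<bar>c i\<bar> \<le> C * (real i + 1)"
  shows "summable (\<lambda>i. c i * M i)"
proof (rule summable_comparison_test'[where N = 0])
  show "summable (\<lambda>i. C * ((real i + 1) * \<bar>M i\<bar>))"
    using assms(1) unfolding inX_def by (rule summable_mult)
  show "norm (c i * M i) \<le> C * ((real i + 1) * \<bar>M i\<bar>)" for i
    using mult_right_mono[OF assms(2)[of i] abs_ge_zero[of "M i"]] by (simp add: abs_mult mult.assoc)
qed

lemma inX_diff:
  assumes "inX M" "inX L"
  shows "inX (\<lambda>i. M i - L i)"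
  unfolding inX_def
proof (rule summable_comparison_test'[where N = 0])
  show "summable (\<lambda>i. (real i + 1) * \<bar>M i\<bar> + (real i + 1) * \<bar>L i\<bar>)"
    using assms unfolding inX_def by (rule summable_add)
  show "norm ((real i + 1) * \<bar>M i - L i\<bar>) \<le> (real i + 1) * \<bar>M i\<bar> + (real i + 1) * \<bar>L i\<bar>" for i
    using mult_left_mono[OF abs_triangle_ineq4[of "M i" "L i"], of "real i + 1"]
    by (simp add: distrib_left)
qed

lemma abs_suminf_weighted_le:
  assumes "inX M" and "\<And>i. \<bar>c i\<bar> \<le> real i + 1"
  shows "\<bar>\<Sum>i. c i * M i\<bar> \<le> (\<Sum>i. (real i + 1) * \<bar>M i\<bar>)"
proof -
  have le: "\<bar>c i * M i\<bar> \<le> (real i + 1) * \<bar>M i\<bar>" for i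
    using mult_right_mono[OF assms(2)[of i] abs_ge_zero[of "M i"]] by (simp add: abs_mult)
  have "summable (\<lambda>i. (real i + 1) * \<bar>M i\<bar>)"
    using assms(1) unfolding inX_def .
  moreover have "summable (\<lambda>i. \<bar>c i * M i\<bar>)"
    by (rule summable_comparison_test'[OF \<open>summable _\<close>, of 0]) (use le in auto)
  ultimately show ?thesis
    using summable_rabs suminf_le[OF le] by (meson order_trans)
qed

lemma Xdist_eq: "Xdist x M y L = \<bar>x - y\<bar> + (\<Sum>i. (real i + 1) * \<bar>M i - L i\<bar>)"
  unfolding Xdist_def Xnorm_def by simp

lemma weighted_partial_sum_le_Xdist:
  assumes "inX M" "inX L" "finite A"
  shows "(\<Sum>i\<in>A. (real i + 1) * \<bar>M i - L i\<bar>) \<le> Xdist x M y L"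
  using sum_le_suminf[OF inX_diff[OF assms(1,2), unfolded inX_def] assms(3)]
  unfolding Xdist_eq by simp

lemma Xdist_nonneg: "inX M \<Longrightarrow> inX L \<Longrightarrow> 0 \<le> Xdist x M y L"
  using weighted_partial_sum_le_Xdist[of M L "{}"] by simp

lemma abs_component_le_Xdist:
  assumes "inX M" "inX L"
  shows "\<bar>M i - L i\<bar> \<le> Xdist x M y L"
proof -
  have "\<bar>M i - L i\<bar> \<le> (real i + 1) * \<bar>M i - L i\<bar>"
    by (simp add: mult_le_cancel_right1)
  also have "\<dots> \<le> Xdist x M y L"
    using weighted_partial_sum_le_Xdist[OF assms, of "{i}"] by simp
  finally show ?thesis .
qed

lemma weighted_partial_sum_le_triangle:
  assumes "inX M" "inX L" "finite A"
  shows "(\<Sum>i\<in>A. (real i + 1) * \<bar>M i\<bar>)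
    \<le> (\<Sum>i\<in>A. (real i + 1) * \<bar>L i\<bar>) + (\<Sum>i. (real i + 1) * \<bar>M i - L i\<bar>)"
proof -
  have "(\<Sum>i\<in>A. (real i + 1) * \<bar>M i\<bar>)
      \<le> (\<Sum>i\<in>A. (real i + 1) * \<bar>L i\<bar>) + (\<Sum>i\<in>A. (real i + 1) * \<bar>M i - L i\<bar>)"
    unfolding sum.distrib[symmetric] by (intro sum_mono) (simp add: mult_left_mono flip: distrib_left)
  also have "(\<Sum>i\<in>A. (real i + 1) * \<bar>M i - L i\<bar>) \<le> (\<Sum>i. (real i + 1) * \<bar>M i - L i\<bar>)"
    using sum_le_suminf[OF inX_diff[OF assms(1,2), unfolded inX_def] assms(3)] by simp
  finally show ?thesis by simp
qed

lemma nonneg_summable_Cauchy: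
  fixes f :: "nat \<Rightarrow> real"
  assumes "summable f" and "\<And>i. f i \<ge> 0" and "\<epsilon> > 0"
  shows "\<exists>m0. \<forall>m\<ge>m0. \<forall>n. (\<Sum>i\<in>{m..<n}. f i) < \<epsilon>"
proof -
  have "norm (\<Sum>i\<in>{m..<n}. f i) = (\<Sum>i\<in>{m..<n}. f i)" for m n
    using assms(2) by (simp add: sum_nonneg)
  thus ?thesis
    using assms(1,3) unfolding summable_Cauchy by metis
qed

section \<open>Reduced coordinates\<close>

definition v_weight :: "nat \<Rightarrow> nat \<Rightarrow> real" where
  "v_weight N i = (if N + 1 \<le> i then real i else 0)"

definition w_weight :: "nat \<Rightarrow> nat \<Rightarrow> real" where
  "w_weight N i = (if N \<le> i then 1 else 0)"

lemma abs_v_weight_le: "\<bar>v_weight N i\<bar> \<le> real i + 1"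
  unfolding v_weight_def by simp

lemma abs_w_weight_le: "\<bar>w_weight N i\<bar> \<le> real i + 1"
  unfolding w_weight_def by simp

lemma reduce_eq:
  "reduce N x M (Suc 0) = x"
  "reduce N x M 2 = (\<Sum>i. M i)"
  "reduce N x M 3 = (\<Sum>i. v_weight N i * M i)"
  "reduce N x M 4 = (\<Sum>i. w_weight N i * M i)"
  "i \<le> N \<Longrightarrow> reduce N x M (i + 5) = M i"
  unfolding reduce_def v_weight_def w_weight_def by (auto intro!: arg_cong[where f = suminf])

lemma suminf_weighted_diff:
  assumes "inX M" "inX L" "\<And>i. \<bar>c i\<bar> \<le> real i + 1"
  shows "(\<Sum>i. c i * M i) - (\<Sum>i. c i * L i) = (\<Sum>i. c i * (M i - L i))"
  using suminf_diff[OF inX_summable_weighted[OF assms(1), of c 1] inX_summable_weighted[OF assms(2), of c 1]]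
    assms(3) by (simp add: right_diff_distrib)

lemma fdist_reduce:
  assumes "inX M" "inX L"
  shows "fdist N (reduce N x M) (reduce N y L) = \<bar>x - y\<bar> + \<bar>\<Sum>i. M i - L i\<bar>
    + \<bar>\<Sum>i. v_weight N i * (M i - L i)\<bar> + \<bar>\<Sum>i. w_weight N i * (M i - L i)\<bar>
    + (\<Sum>i\<le>N. \<bar>M i - L i\<bar>)"
proof -
  have "(\<lambda>i. i + 5) ` {..N} = {5..N + 5}"
    by (simp flip: atLeast0AtMost)
  hence split: "{1..N + 5} = {1, 2, 3, 4} \<union> (\<lambda>i. i + 5) ` {..N}"
    by auto
  have "fdist N (reduce N x M) (reduce N y L) = (\<Sum>j\<in>{1, 2, 3, 4}. \<bar>reduce N x M j - reduce N y L j\<bar>)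
      + (\<Sum>i\<le>N. \<bar>reduce N x M (i + 5) - reduce N y L (i + 5)\<bar>)"
    unfolding fdist_def split by (subst sum.union_disjoint) (auto simp: sum.reindex)
  moreover have "reduce N x M 1 - reduce N y L 1 = x - y"
    by (simp add: reduce_eq)
  moreover have "(\<Sum>i. M i) - (\<Sum>i. L i) = (\<Sum>i. M i - L i)"
    using suminf_weighted_diff[OF assms, of "\<lambda>_. 1"] by simp
  ultimately show ?thesis
    using suminf_weighted_diff[OF assms abs_v_weight_le[of N]]
      suminf_weighted_diff[OF assms abs_w_weight_le[of N]]
    by (simp add: reduce_eq)
qed

lemma abs_diff_le_fdist_reduce:
  assumes "inX M" "inX L"
  shows "\<bar>x - y\<bar> \<le> fdist N (reduce N x M) (reduce N y L)"
  unfolding fdist_reduce[OF assms] by (simp add: sum_nonneg)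

lemma fdist_reduce_le_Xdist:
  assumes "inX M" "inX L"
  shows "fdist N (reduce N x M) (reduce N y L) \<le> 4 * Xdist x M y L"
proof -
  define D where "D = (\<Sum>i. (real i + 1) * \<bar>M i - L i\<bar>)"
  note weighted_le = abs_suminf_weighted_le[OF inX_diff[OF assms], folded D_def]
  have "(\<Sum>i\<le>N. \<bar>M i - L i\<bar>) \<le> (\<Sum>i\<le>N. (real i + 1) * \<bar>M i - L i\<bar>)"
    by (intro sum_mono) (simp add: mult_le_cancel_right1)
  also have "\<dots> \<le> Xdist x M y L"
    by (rule weighted_partial_sum_le_Xdist[OF assms]) simp
  finally show ?thesis
    using weighted_le[of "\<lambda>_. 1", simplified] weighted_le[OF abs_v_weight_le[of N]] weighted_le[OF abs_w_weight_le[of N]]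
    unfolding fdist_reduce[OF assms] Xdist_eq D_def[symmetric] distrib_left
    using abs_ge_zero[of "x - y"] by linarith
qed

lemma weighted_mass_split:
  assumes "inX M"
  shows "(\<Sum>i. (real i + 1) * M i) = (\<Sum>i\<le>N. (real i + 1) * M i) - M N
    + (\<Sum>i. v_weight N i * M i) + (\<Sum>i. w_weight N i * M i)"
proof -
  have "(\<lambda>i. (if i \<in> {..N} then (real i + 1) * M i else 0) - (if i = N then M i else 0)
      + v_weight N i * M i + w_weight N i * M i)
      sums ((\<Sum>i\<le>N. (real i + 1) * M i) - M N + (\<Sum>i. v_weight N i * M i) + (\<Sum>i. w_weight N i * M i))"
    using assms abs_v_weight_le abs_w_weight_le
    by (intro sums_add sums_diff sums_If_finite_set sums_single summable_sums inX_summable_weighted[of M _ 1])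
      auto
  moreover have "(\<lambda>i. (if i \<in> {..N} then (real i + 1) * M i else 0) - (if i = N then M i else 0)
      + v_weight N i * M i + w_weight N i * M i) = (\<lambda>i. (real i + 1) * M i)"
    unfolding v_weight_def w_weight_def by (auto simp: algebra_simps)
  ultimately show ?thesis
    by (simp add: sums_iff)
qed

definition weighted_tail :: "(nat \<Rightarrow> real) \<Rightarrow> nat \<Rightarrow> real" where
  "weighted_tail L I = (\<Sum>i. (real (i + I) + 1) * \<bar>L (i + I)\<bar>)"

lemma weighted_tail_tendsto_0: "inX L \<Longrightarrow> weighted_tail L \<longlonglongrightarrow> 0"
  unfolding weighted_tail_def inX_def by (rule suminf_exist_split2)

text \<open>Since \<open>M \<ge> 0\<close>, the negative part of \<open>M - L\<close> is at most \<open>L\<close>.\<close>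

lemma weighted_abs_diff_le:
  assumes M: "inX M" "\<And>i. M i \<ge> 0" and L: "inX L"
  shows "(\<Sum>i. (real i + 1) * \<bar>M i - L i\<bar>) \<le> (\<Sum>i. (real i + 1) * (M i - L i))
    + 2 * (\<Sum>i<I. (real i + 1) * \<bar>M i - L i\<bar>) + 2 * weighted_tail L I"
proof -
  define p where "p i = (real i + 1) * max 0 (L i - M i)" for i
  have p_le: "p i \<le> (real i + 1) * \<bar>M i - L i\<bar>" for i
    unfolding p_def by (intro mult_left_mono) auto
  have "summable p"
    by (rule summable_comparison_test'[OF inX_diff[OF M(1) L, unfolded inX_def], of 0])
      (use p_le in \<open>auto simp: p_def\<close>)
  have "summable (\<lambda>i. (real i + 1) * (M i - L i))"
    using inX_summable_weighted[OF inX_diff[OF M(1) L], of "\<lambda>i. real i + 1" 1] by simp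
  moreover have "(real i + 1) * \<bar>M i - L i\<bar> = (real i + 1) * (M i - L i) + 2 * p i" for i
    unfolding p_def by (simp add: algebra_simps abs_if max_def)
  ultimately have "(\<Sum>i. (real i + 1) * \<bar>M i - L i\<bar>) = (\<Sum>i. (real i + 1) * (M i - L i)) + 2 * (\<Sum>i. p i)"
    using suminf_add[OF _ summable_mult[OF \<open>summable p\<close>, of 2]] suminf_mult[OF \<open>summable p\<close>, of 2]
    by simp
  moreover have "(\<Sum>i. p i) = (\<Sum>i. p (i + I)) + (\<Sum>i<I. p i)"
    by (rule suminf_split_initial_segment[OF \<open>summable p\<close>])
  moreover have "(\<Sum>i. p (i + I)) \<le> weighted_tail L I"
    unfolding weighted_tail_def
  proof (rule suminf_le)
    show "p (i + I) \<le> (real (i + I) + 1) * \<bar>L (i + I)\<bar>" for i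
      unfolding p_def using M(2)[of "i + I"] by (intro mult_left_mono) auto
  qed (use summable_ignore_initial_segment[OF \<open>summable p\<close>]
        summable_ignore_initial_segment[OF L[unfolded inX_def]] in auto)
  moreover have "(\<Sum>i<I. p i) \<le> (\<Sum>i<I. (real i + 1) * \<bar>M i - L i\<bar>)"
    by (intro sum_mono p_le)
  ultimately show ?thesis by linarith
qed

lemma Xdist_le_fdist_reduce:
  assumes M: "inX M" "\<And>i. M i \<ge> 0" and L: "inX L"
  shows "Xdist x M y L \<le> (real N + 2) * fdist N (reduce N x M) (reduce N y L)
    + 2 * (\<Sum>i<I. (real i + 1) * \<bar>M i - L i\<bar>) + 2 * weighted_tail L I"
proof -
  define d where "d i = M i - L i" for i
  define S where "S = (\<Sum>i\<le>N. \<bar>d i\<bar>)"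
  define R where "R = \<bar>x - y\<bar> + \<bar>\<Sum>i. d i\<bar> + \<bar>\<Sum>i. v_weight N i * d i\<bar> + \<bar>\<Sum>i. w_weight N i * d i\<bar>"
  have fd: "fdist N (reduce N x M) (reduce N y L) = R + S"
    unfolding fdist_reduce[OF M(1) L] R_def S_def d_def ..
  have "\<bar>\<Sum>i\<le>N. (real i + 1) * d i\<bar> \<le> (\<Sum>i\<le>N. (real N + 1) * \<bar>d i\<bar>)"
    by (rule order_trans[OF sum_abs sum_mono]) (auto simp: abs_mult intro!: mult_right_mono)
  hence "(\<Sum>i. (real i + 1) * d i) \<le> (real N + 1) * S + \<bar>d N\<bar> + \<bar>\<Sum>i. v_weight N i * d i\<bar> + \<bar>\<Sum>i. w_weight N i * d i\<bar>"
    using weighted_mass_split[OF inX_diff[OF M(1) L], of N] unfolding S_def d_def sum_distrib_left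
    by linarith
  moreover have "\<bar>d N\<bar> \<le> S"
    unfolding S_def by (rule member_le_sum) auto
  moreover have "R \<le> (real N + 2) * R" "R \<ge> 0"
    unfolding R_def by (simp_all add: mult_le_cancel_right1)
  moreover have "(real N + 2) * (R + S) = (real N + 2) * R + (real N + 1) * S + S"
    by (simp add: algebra_simps)
  ultimately have "\<bar>x - y\<bar> + (\<Sum>i. (real i + 1) * d i) \<le> (real N + 2) * (R + S)"
    unfolding R_def by linarith
  thus ?thesis
    using weighted_abs_diff_le[OF M L, of I] unfolding Xdist_eq fd d_def by linarith
qed

text \<open>Summation by parts: reindexing the inflow \<open>k x M\<^sub>i\<^sub>-\<^sub>1\<close> of the equation for \<open>M\<^sub>i\<close>
  leaves \<open>M\<^sub>i\<close> with the weight \<open>c (i + 1) - c i\<close>.\<close>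

lemma weighted_S_rhs_M_sums:
  assumes M: "inX M" and c: "\<And>i. \<bar>c i\<bar> \<le> C * (real i + 1)"
  shows "(\<lambda>i. c i * S_rhs_M k r x M i)
    sums (c 0 * r + k * x * (\<Sum>i. (c (Suc i) - c i) * M i) - (\<Sum>i. c i * M i))"
proof -
  have "C \<ge> 0" using c[of 0] by simp
  have "\<bar>c (Suc i)\<bar> \<le> (2 * C) * (real i + 1)" for i
  proof -
    have "C * (real (Suc i) + 1) = (2 * C) * (real i + 1) - C * real i"
      by (simp add: algebra_simps)
    thus ?thesis using c[of "Suc i"] mult_nonneg_nonneg[OF \<open>C \<ge> 0\<close>, of "real i"] by simp
  qed
  hence c_Suc: "summable (\<lambda>i. c (Suc i) * M i)"
    by (rule inX_summable_weighted[OF M])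
  have c_id: "summable (\<lambda>i. c i * M i)"
    by (rule inX_summable_weighted[OF M c])
  define A where "A = (\<Sum>i. c (Suc i) * M i)"
  define B where "B = (\<Sum>i. c i * M i)"
  define a where "a i = (if i = 0 then c 0 * r else k * x * (c i * M (i - 1)))" for i
  have "(\<lambda>i. a (Suc i)) sums (k * x * A)"
    unfolding a_def A_def using sums_mult[OF summable_sums[OF c_Suc]] by simp
  hence "a sums (k * x * A + a 0)"
    by (simp only: sums_Suc_iff)
  hence "a sums (k * x * A + c 0 * r)"
    by (simp add: a_def)
  hence "(\<lambda>i. a i - (k * x + 1) * (c i * M i)) sums (k * x * A + c 0 * r - (k * x + 1) * B)"
    unfolding B_def by (intro sums_diff sums_mult summable_sums c_id)
  moreover have "(\<lambda>i. a i - (k * x + 1) * (c i * M i)) = (\<lambda>i. c i * S_rhs_M k r x M i)"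
    unfolding a_def S_rhs_M_def by (auto simp: algebra_simps)
  moreover have "(\<Sum>i. (c (Suc i) - c i) * M i) = A - B"
    using suminf_diff[OF c_Suc c_id] unfolding A_def B_def by (simp add: left_diff_distrib)
  moreover have "k * x * A + c 0 * r - (k * x + 1) * B = c 0 * r + k * x * (A - B) - B"
    by (simp add: algebra_simps)
  ultimately show ?thesis
    unfolding B_def[symmetric] by simp
qed

lemma suminf_S_rhs_M:
  assumes "inX M"
  shows "(\<Sum>i. S_rhs_M k r x M i) = r - (\<Sum>i. M i)"
  using weighted_S_rhs_M_sums[OF assms, of "\<lambda>_. 1" 1 k r x] by (simp add: sums_iff)

lemma suminf_v_weight_S_rhs_M:
  assumes "inX M"
  shows "(\<Sum>i. v_weight N i * S_rhs_M k r x M i)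
    = k * x * ((\<Sum>i. w_weight N i * M i) + real N * M N) - (\<Sum>i. v_weight N i * M i)"
proof -
  have "(\<lambda>i. w_weight N i * M i + (if i = N then real N * M i else 0))
      sums ((\<Sum>i. w_weight N i * M i) + real N * M N)"
    using assms abs_w_weight_le
    by (intro sums_add sums_single summable_sums inX_summable_weighted[of M _ 1]) auto
  moreover have "(\<lambda>i. (v_weight N (Suc i) - v_weight N i) * M i)
      = (\<lambda>i. w_weight N i * M i + (if i = N then real N * M i else 0))"
    unfolding v_weight_def w_weight_def by (auto simp: algebra_simps)
  ultimately show ?thesis
    using weighted_S_rhs_M_sums[OF assms, of "v_weight N" 1 k r x] abs_v_weight_le[of N]
    by (simp add: sums_iff v_weight_def)
qed

lemma suminf_w_weight_S_rhs_M:
  assumes "inX M" and "N \<ge> 1"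
  shows "(\<Sum>i. w_weight N i * S_rhs_M k r x M i) = k * x * M (N - 1) - (\<Sum>i. w_weight N i * M i)"
proof -
  have "(\<lambda>i. (w_weight N (Suc i) - w_weight N i) * M i) = (\<lambda>i. if i = N - 1 then M i else 0)"
    using \<open>N \<ge> 1\<close> unfolding w_weight_def by (intro ext) auto
  with sums_single[of "N - 1" M] show ?thesis
    using weighted_S_rhs_M_sums[OF assms(1), of "w_weight N" 1 k r x] abs_w_weight_le[of N] \<open>N \<ge> 1\<close>
    by (simp add: sums_iff w_weight_def)
qed

lemma F_reduce:
  assumes "inX M" and "N \<ge> 1" and "j \<in> {1..N + 5}"
  shows "F N k r \<alpha> (reduce N x M) j = reduce N (S_rhs_x N k \<alpha> x M) (S_rhs_M k r x M) j"
proof -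
  have "j = 1 \<or> j = 2 \<or> j = 3 \<or> j = 4 \<or> (5 \<le> j \<and> j \<le> N + 5)"
    using assms(3) by auto
  then consider "j = 1" | "j = 2" | "j = 3" | "j = 4" | "5 \<le> j" "j \<le> N + 5"
    by blast
  thus ?thesis
  proof cases
    case 1
    thus ?thesis by (simp add: F_def reduce_def S_rhs_x_def)
  next
    case 2
    thus ?thesis using suminf_S_rhs_M[OF assms(1)] by (simp add: F_def reduce_eq)
  next
    case 3
    thus ?thesis using suminf_v_weight_S_rhs_M[OF assms(1)] by (simp add: F_def reduce_eq algebra_simps)
  next
    case 4
    have "reduce N x M (N + 4) = M (N - 1)"
      using assms(2) by (simp add: reduce_def)
    thus ?thesis using 4 suminf_w_weight_S_rhs_M[OF assms(1,2)] by (simp add: F_def reduce_eq algebra_simps)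
  next
    case 5
    then obtain i where "j = i + 5" "i \<le> N"
      by (intro that[of "j - 5"]) auto
    thus ?thesis
      by (cases i) (simp_all add: F_def reduce_def S_rhs_M_def algebra_simps)
  qed
qed

section \<open>Differentiating the moments of a solution\<close>

lemma S_solutionD:
  assumes "S_solution N k r \<alpha> xs Ms" "t \<ge> 0"
  shows "inX (Ms t)" "xs t \<ge> 0" "Ms t i \<ge> 0"
  using assms unfolding S_solution_def inXplus_def by auto

lemma S_solution_weighted_continuous:
  assumes sol: "S_solution N k r \<alpha> xs Ms" and "t \<ge> 0"
  shows "((\<lambda>s. \<Sum>i. (real i + 1) * \<bar>Ms s i - Ms t i\<bar>) \<longlongrightarrow> 0) (at t within {0..})"
proof (rule tendsto_sandwich[where f = "\<lambda>_. 0"])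
  have "0 \<le> (\<Sum>i. (real i + 1) * \<bar>Ms s i - Ms t i\<bar>)" if "s \<ge> 0" for s
    using inX_diff[OF S_solutionD(1)[OF sol that] S_solutionD(1)[OF sol \<open>t \<ge> 0\<close>]]
    unfolding inX_def by (rule suminf_nonneg) simp
  thus "\<forall>\<^sub>F s in at t within {0..}. 0 \<le> (\<Sum>i. (real i + 1) * \<bar>Ms s i - Ms t i\<bar>)"
    unfolding eventually_at_filter by (auto intro: always_eventually)
  show "\<forall>\<^sub>F s in at t within {0..}. (\<Sum>i. (real i + 1) * \<bar>Ms s i - Ms t i\<bar>) \<le> Xdist (xs s) (Ms s) (xs t) (Ms t)"
    by (simp add: Xdist_eq)
  show "((\<lambda>s. Xdist (xs s) (Ms s) (xs t) (Ms t)) \<longlongrightarrow> 0) (at t within {0..})"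
    using sol \<open>t \<ge> 0\<close> unfolding S_solution_def by auto
qed simp

lemma weighted_tail_small_near:
  fixes Ms :: "'a::metric_space \<Rightarrow> nat \<Rightarrow> real"
  assumes "t \<in> K" and Ms_inX: "\<And>t. t \<in> K \<Longrightarrow> inX (Ms t)"
    and cont: "((\<lambda>s. \<Sum>i. (real i + 1) * \<bar>Ms s i - Ms t i\<bar>) \<longlongrightarrow> 0) (at t within K)"
    and "\<epsilon> > 0"
  shows "\<exists>d>0. \<exists>m0. \<forall>s\<in>K. dist s t < d \<longrightarrow>
    (\<forall>m\<ge>m0. \<forall>n. (\<Sum>i\<in>{m..<n}. (real i + 1) * \<bar>Ms s i\<bar>) < \<epsilon>)"
proof -
  have "\<forall>\<^sub>F s in at t within K. (\<Sum>i. (real i + 1) * \<bar>Ms s i - Ms t i\<bar>) < \<epsilon> / 2"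
    using cont \<open>\<epsilon> > 0\<close> by (intro order_tendstoD) auto
  then obtain d where "d > 0"
    and "\<forall>s\<in>K. s \<noteq> t \<and> dist s t < d \<longrightarrow> (\<Sum>i. (real i + 1) * \<bar>Ms s i - Ms t i\<bar>) < \<epsilon> / 2"
    unfolding eventually_at by blast
  hence near: "(\<Sum>i. (real i + 1) * \<bar>Ms s i - Ms t i\<bar>) < \<epsilon> / 2" if "s \<in> K" "dist s t < d" for s
    using that \<open>\<epsilon> > 0\<close> by (cases "s = t") auto
  obtain m0 where tail: "\<forall>m\<ge>m0. \<forall>n. (\<Sum>i\<in>{m..<n}. (real i + 1) * \<bar>Ms t i\<bar>) < \<epsilon> / 2"
    using nonneg_summable_Cauchy[OF Ms_inX[OF \<open>t \<in> K\<close>, unfolded inX_def] _ half_gt_zero[OF \<open>\<epsilon> > 0\<close>]]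
    by auto
  have "(\<Sum>i\<in>{m..<n}. (real i + 1) * \<bar>Ms s i\<bar>) < \<epsilon>"
    if "s \<in> K" "dist s t < d" "m0 \<le> m" for s m n
  proof -
    have "(\<Sum>i\<in>{m..<n}. (real i + 1) * \<bar>Ms t i\<bar>) < \<epsilon> / 2"
      using tail that(3) by blast
    thus ?thesis
      using weighted_partial_sum_le_triangle[OF Ms_inX[OF \<open>s \<in> K\<close>] Ms_inX[OF \<open>t \<in> K\<close>] finite_atLeastLessThan[of m n]]
        near[OF that(1,2)] by linarith
  qed
  thus ?thesis
    using \<open>d > 0\<close> by blast
qed

lemma uniform_weighted_tail:
  fixes Ms :: "'a::metric_space \<Rightarrow> nat \<Rightarrow> real"
  assumes "compact K" and Ms_inX: "\<And>t. t \<in> K \<Longrightarrow> inX (Ms t)"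
    and cont: "\<And>t. t \<in> K \<Longrightarrow> ((\<lambda>s. \<Sum>i. (real i + 1) * \<bar>Ms s i - Ms t i\<bar>) \<longlongrightarrow> 0) (at t within K)"
    and "\<epsilon> > 0"
  shows "\<exists>m0. \<forall>s\<in>K. \<forall>m\<ge>m0. \<forall>n. (\<Sum>i\<in>{m..<n}. (real i + 1) * \<bar>Ms s i\<bar>) < \<epsilon>"
proof -
  define good where "good t dm \<longleftrightarrow> snd dm > 0 \<and> (\<forall>s\<in>K. dist s t < snd dm \<longrightarrow>
      (\<forall>m\<ge>fst dm. \<forall>n. (\<Sum>i\<in>{m..<n}. (real i + 1) * \<bar>Ms s i\<bar>) < \<epsilon>))" for t dm
  have "\<exists>dm. good t dm" if t: "t \<in> K" for t
  proof -
    obtain d m0 where "d > 0" "\<forall>s\<in>K. dist s t < d \<longrightarrow>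
        (\<forall>m\<ge>m0. \<forall>n. (\<Sum>i\<in>{m..<n}. (real i + 1) * \<bar>Ms s i\<bar>) < \<epsilon>)"
      using weighted_tail_small_near[OF t Ms_inX cont[OF t] \<open>\<epsilon> > 0\<close>] by blast
    thus ?thesis
      unfolding good_def by (intro exI[of _ "(m0, d)"]) auto
  qed
  then obtain md where md: "\<forall>t\<in>K. good t (md t)"
    using bchoice[of K good] by blast
  have cover: "K \<subseteq> (\<Union>t\<in>K. ball t (snd (md t)))"
  proof
    fix s assume "s \<in> K"
    hence "snd (md s) > 0" using md unfolding good_def by blast
    thus "s \<in> (\<Union>t\<in>K. ball t (snd (md t)))" using \<open>s \<in> K\<close> by (intro UN_I[of s]) auto
  qed
  obtain T where T: "T \<subseteq> K" "finite T" "K \<subseteq> (\<Union>t\<in>T. ball t (snd (md t)))"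
    by (rule compactE_image[OF \<open>compact K\<close> _ cover]) auto
  have "(\<Sum>i\<in>{m..<n}. (real i + 1) * \<bar>Ms s i\<bar>) < \<epsilon>"
    if "s \<in> K" and m: "Max (insert 0 (fst ` md ` T)) \<le> m" for s m n
  proof -
    obtain t where t: "t \<in> T" "dist s t < snd (md t)"
      using T(3) \<open>s \<in> K\<close> by (auto simp: dist_commute)
    moreover have "fst (md t) \<le> m"
      using Max_ge[of "insert 0 (fst ` md ` T)" "fst (md t)"] t T(2) m by simp
    ultimately show ?thesis
      using md T(1) \<open>s \<in> K\<close> unfolding good_def by blast
  qed
  thus ?thesis by blast
qed

lemma abs_weighted_S_rhs_M_le:
  assumes "i \<ge> 1" and "\<bar>x\<bar> \<le> X" and "k \<ge> 0" and "\<bar>c\<bar> \<le> real i + 1"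
  shows "\<bar>c * S_rhs_M k r x M i\<bar>
    \<le> 2 * k * X * ((real (i - 1) + 1) * \<bar>M (i - 1)\<bar>) + (k * X + 1) * ((real i + 1) * \<bar>M i\<bar>)"
proof -
  have kx: "\<bar>k * x\<bar> \<le> k * X"
    using assms(2,3) by (simp add: abs_mult mult_left_mono)
  have "\<bar>k * x * M (i - 1)\<bar> \<le> k * X * \<bar>M (i - 1)\<bar>" "\<bar>k * x * M i\<bar> \<le> k * X * \<bar>M i\<bar>"
    using mult_right_mono[OF kx] by (simp_all add: abs_mult)
  hence "\<bar>S_rhs_M k r x M i\<bar> \<le> k * X * \<bar>M (i - 1)\<bar> + (k * X + 1) * \<bar>M i\<bar>"
    using assms(1) unfolding S_rhs_M_def by (simp add: distrib_right) arith
  hence "\<bar>c * S_rhs_M k r x M i\<bar> \<le> (real i + 1) * (k * X * \<bar>M (i - 1)\<bar> + (k * X + 1) * \<bar>M i\<bar>)"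
    unfolding abs_mult using assms(4) by (intro mult_mono) auto
  moreover have "(real i + 1) * \<bar>M (i - 1)\<bar> \<le> 2 * ((real (i - 1) + 1) * \<bar>M (i - 1)\<bar>)"
    using assms(1) mult_right_mono[of "real i + 1" "2 * (real (i - 1) + 1)" "\<bar>M (i - 1)\<bar>"]
    by (simp add: of_nat_diff)
  from mult_left_mono[OF this, of "k * X"]
  have "k * X * ((real i + 1) * \<bar>M (i - 1)\<bar>) \<le> 2 * k * X * ((real (i - 1) + 1) * \<bar>M (i - 1)\<bar>)"
    using assms(2,3) by simp
  ultimately show ?thesis
    by (simp add: algebra_simps)
qed

lemma sum_abs_weighted_S_rhs_M_le:
  assumes "m \<ge> 1" and "\<bar>x\<bar> \<le> X" and "k \<ge> 0" and c: "\<And>i. \<bar>c i\<bar> \<le> real i + 1"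
  shows "(\<Sum>i\<in>{m..<n}. \<bar>c i * S_rhs_M k r x M i\<bar>)
    \<le> 2 * k * X * (\<Sum>i\<in>{m - 1..<n - 1}. (real i + 1) * \<bar>M i\<bar>)
      + (k * X + 1) * (\<Sum>i\<in>{m..<n}. (real i + 1) * \<bar>M i\<bar>)"
proof -
  define w where "w i = (real i + 1) * \<bar>M i\<bar>" for i
  have "(\<Sum>i\<in>{m..<n}. \<bar>c i * S_rhs_M k r x M i\<bar>) \<le> (\<Sum>i\<in>{m..<n}. 2 * k * X * w (i - 1) + (k * X + 1) * w i)"
    unfolding w_def using assms by (intro sum_mono abs_weighted_S_rhs_M_le) auto
  also have "(\<Sum>i\<in>{m..<n}. w (i - 1)) = (\<Sum>i\<in>{m - 1..<n - 1}. w i)"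
    using \<open>m \<ge> 1\<close> by (intro sum.reindex_bij_witness[of _ Suc "\<lambda>i. i - 1"]) auto
  hence "(\<Sum>i\<in>{m..<n}. 2 * k * X * w (i - 1) + (k * X + 1) * w i)
      = 2 * k * X * (\<Sum>i\<in>{m - 1..<n - 1}. w i) + (k * X + 1) * (\<Sum>i\<in>{m..<n}. w i)"
    by (simp add: sum.distrib flip: sum_distrib_left)
  finally show ?thesis
    unfolding w_def .
qed

lemma uniformly_Cauchy_weighted_S_rhs_M:
  assumes sol: "S_solution N k r \<alpha> xs Ms" and K: "compact K" "K \<subseteq> {0..}"
    and "k \<ge> 0" and X: "X \<ge> 0" "\<And>s. s \<in> K \<Longrightarrow> \<bar>xs s\<bar> \<le> X"
    and c: "\<And>i. \<bar>c i\<bar> \<le> real i + 1"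
  shows "uniformly_Cauchy_on K (\<lambda>n s. \<Sum>i<n. c i * S_rhs_M k r (xs s) (Ms s) i)"
  unfolding uniformly_Cauchy_on_def
proof (intro allI impI)
  fix e :: real assume "e > 0"
  define B where "B = 3 * k * X + 1"
  have "k * X \<ge> 0"
    using \<open>k \<ge> 0\<close> X(1) by simp
  hence "B > 0"
    unfolding B_def by (simp add: mult.assoc)
  have "inX (Ms t)" and "((\<lambda>s. \<Sum>i. (real i + 1) * \<bar>Ms s i - Ms t i\<bar>) \<longlongrightarrow> 0) (at t within K)"
    if "t \<in> K" for t
    using S_solutionD(1)[OF sol] S_solution_weighted_continuous[OF sol] that K(2)
    by (auto intro: tendsto_within_subset)
  then obtain m0 where m0: "\<forall>s\<in>K. \<forall>m\<ge>m0. \<forall>n. (\<Sum>i\<in>{m..<n}. (real i + 1) * \<bar>Ms s i\<bar>) < e / B"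
    using uniform_weighted_tail[OF K(1), of Ms "e / B"] \<open>e > 0\<close> \<open>B > 0\<close> by auto
  define f where "f i s = c i * S_rhs_M k r (xs s) (Ms s) i" for i s
  have tail: "\<bar>\<Sum>i\<in>{m..<n}. f i s\<bar> < e" if "s \<in> K" "m0 < m" for s m n
  proof -
    have "\<bar>\<Sum>i\<in>{m..<n}. f i s\<bar>
        \<le> 2 * k * X * (\<Sum>i\<in>{m - 1..<n - 1}. (real i + 1) * \<bar>Ms s i\<bar>)
          + (k * X + 1) * (\<Sum>i\<in>{m..<n}. (real i + 1) * \<bar>Ms s i\<bar>)"
      unfolding f_def using that \<open>k \<ge> 0\<close> X(2) c
      by (intro order_trans[OF sum_abs] sum_abs_weighted_S_rhs_M_le) auto
    also have "\<dots> < 2 * k * X * (e / B) + (k * X + 1) * (e / B)"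
    proof -
      have "(\<Sum>i\<in>{m - 1..<n - 1}. (real i + 1) * \<bar>Ms s i\<bar>) < e / B"
        and "(\<Sum>i\<in>{m..<n}. (real i + 1) * \<bar>Ms s i\<bar>) < e / B"
        using m0 that by auto
      thus ?thesis
        using \<open>k * X \<ge> 0\<close> by (intro add_le_less_mono mult_left_mono mult_strict_left_mono) (auto simp: mult.commute)
    qed
    also have "\<dots> = (2 * k * X + (k * X + 1)) * (e / B)"
      by (simp only: distrib_right)
    also have "\<dots> = B * (e / B)"
      unfolding B_def by (simp add: algebra_simps del: times_divide_eq_right)
    also have "\<dots> = e"
      using \<open>B > 0\<close> by simp
    finally show ?thesis .
  qed
  have "(\<Sum>i<n. f i s) - (\<Sum>i<m. f i s) = (\<Sum>i\<in>{m..<n}. f i s)" if "m \<le> n" for m n s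
    using sum_diff_nat_ivl[of 0 m n] that by (simp add: atLeast0LessThan)
  thus "\<exists>M. \<forall>s\<in>K. \<forall>m\<ge>M. \<forall>n\<ge>M. dist (\<Sum>i<m. f i s) (\<Sum>i<n. f i s) < e"
    using tail unfolding dist_real_def
    by (intro exI[of _ "Suc m0"] ballI allI impI, metis abs_minus_commute Suc_le_eq nat_le_linear)
qed

lemma weighted_moment_has_derivative:
  assumes sol: "S_solution N k r \<alpha> xs Ms" and "t \<ge> 0" and "k \<ge> 0"
    and c: "\<And>i. \<bar>c i\<bar> \<le> real i + 1"
  shows "((\<lambda>s. \<Sum>i. c i * Ms s i) has_real_derivative (\<Sum>i. c i * S_rhs_M k r (xs t) (Ms t) i))
    (at t within {0..})"
proof -
  define K where "K = {max 0 (t - 1)..t + 1}"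
  have K: "compact K" "convex K" "K \<subseteq> {0..}" "t \<in> K"
    unfolding K_def using \<open>t \<ge> 0\<close> by auto
  have "continuous_on {0..} xs"
    using sol unfolding S_solution_def by (intro DERIV_continuous_on) auto
  hence "continuous_on K xs"
    using K(3) by (rule continuous_on_subset)
  hence "bounded (xs ` K)"
    using K(1) by (intro compact_imp_bounded compact_continuous_image)
  then obtain X where X: "\<And>s. s \<in> K \<Longrightarrow> \<bar>xs s\<bar> \<le> X"
    unfolding bounded_iff by auto
  have "X \<ge> 0" using X[OF K(4)] by simp
  define f' where "f' i s = c i * S_rhs_M k r (xs s) (Ms s) i" for i s
  obtain g' where g': "uniform_limit K (\<lambda>n s. \<Sum>i<n. f' i s) g' sequentially"
    using uniformly_Cauchy_weighted_S_rhs_M[OF sol K(1,3) \<open>k \<ge> 0\<close> \<open>X \<ge> 0\<close> X c]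
      Cauchy_uniformly_convergent unfolding uniformly_convergent_on_def f'_def by blast
  have M_deriv: "((\<lambda>s. Ms s i) has_real_derivative S_rhs_M k r (xs s) (Ms s) i) (at s within {0..})"
    if "s \<in> K" for i s
    using sol that K(3) unfolding S_solution_def by auto
  have termwise: "((\<lambda>s. c i * Ms s i) has_real_derivative f' i s) (at s within K)" if "s \<in> K" for i s
    unfolding f'_def by (rule DERIV_cmult[OF DERIV_subset[OF M_deriv[OF that] K(3)]])
  have "summable (\<lambda>i. c i * Ms t i)"
    using inX_summable_weighted[OF S_solutionD(1)[OF sol \<open>t \<ge> 0\<close>], of c 1] c by simp
  from has_field_derivative_series[OF K(2) termwise g' K(4) this]
  obtain g where g: "\<forall>s\<in>K. (\<lambda>i. c i * Ms s i) sums g s \<and> (g has_real_derivative g' s) (at s within K)"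
    by blast
  have "(\<lambda>n. \<Sum>i<n. f' i t) \<longlonglongrightarrow> g' t"
    by (rule tendsto_uniform_limitI[OF g' K(4)])
  hence "g' t = (\<Sum>i. f' i t)"
    by (simp add: sums_def sums_unique)
  moreover have "((\<lambda>s. \<Sum>i. c i * Ms s i) has_real_derivative g' t) (at t within K)"
  proof (rule has_field_derivative_transform_within[OF _ zero_less_one K(4)])
    show "(g has_real_derivative g' t) (at t within K)"
      using g K(4) by blast
    show "g s = (\<Sum>i. c i * Ms s i)" if "s \<in> K" for s
      using g that by (simp add: sums_unique)
  qed
  moreover have "at t within {0..} = at t within K"
    by (rule at_within_nhd[of t "ball t 1"]) (auto simp: K_def dist_real_def)
  ultimately show ?thesis
    unfolding f'_def by simp
qed

lemma reduce_has_derivative: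
  assumes sol: "S_solution N k r \<alpha> xs Ms" and "k \<ge> 0" and "t \<ge> 0" and "j \<in> {1..N + 5}"
  shows "((\<lambda>s. reduce N (xs s) (Ms s) j) has_real_derivative
      reduce N (S_rhs_x N k \<alpha> (xs t) (Ms t)) (S_rhs_M k r (xs t) (Ms t)) j) (at t within {0..})"
proof -
  have "j = 1 \<or> j = 2 \<or> j = 3 \<or> j = 4 \<or> (\<exists>i\<le>N. j = i + 5)"
    using assms(4) by (auto intro!: exI[of _ "j - 5"])
  moreover note moment = weighted_moment_has_derivative[OF sol \<open>t \<ge> 0\<close> \<open>k \<ge> 0\<close>]
  ultimately show ?thesis
    using sol \<open>t \<ge> 0\<close> moment[of "\<lambda>_. 1"] moment[OF abs_v_weight_le] moment[OF abs_w_weight_le]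
    unfolding S_solution_def by (auto simp: reduce_eq)
qed

lemma reduce_F_solution:
  assumes sol: "S_solution N k r \<alpha> xs Ms" and "k \<ge> 0" and "N \<ge> 1"
  shows "F_solution_on N k r \<alpha> T (\<lambda>s. reduce N (xs s) (Ms s))"
  unfolding F_solution_on_def
proof (intro ballI)
  fix t j assume "t \<in> {0..<T}" "j \<in> {1..N + 5}"
  thus "((\<lambda>s. reduce N (xs s) (Ms s) j) has_real_derivative F N k r \<alpha> (reduce N (xs t) (Ms t)) j)
      (at t within {0..<T})"
    using F_reduce[OF S_solutionD(1)[OF sol] \<open>N \<ge> 1\<close>]
    by (auto intro: DERIV_subset[OF reduce_has_derivative[OF sol \<open>k \<ge> 0\<close>]])
qed

section \<open>Exponential decay of the deviations\<close>

definition deviation_forcing :: "real \<Rightarrow> real \<Rightarrow> (nat \<Rightarrow> real) \<Rightarrow> real \<Rightarrow> (nat \<Rightarrow> real) \<Rightarrow> nat \<Rightarrow> real" where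
  "deviation_forcing k xe Me x M i =
     (if i = 0 then - k * (x - xe) * Me 0
      else k * x * (M (i - 1) - Me (i - 1)) + k * (x - xe) * (Me (i - 1) - Me i))"

lemma S_rhs_M_deviation:
  assumes "S_rhs_M k r xe Me i = 0"
  shows "S_rhs_M k r x M i = - (k * x + 1) * (M i - Me i) + deviation_forcing k xe Me x M i"
  using assms unfolding S_rhs_M_def deviation_forcing_def by (cases "i = 0") (auto simp: algebra_simps)

lemma deviation_exp_decay_step:
  assumes sol: "S_solution N k r \<alpha> xs Ms" and "k \<ge> 0" and eq: "S_rhs_M k r xe Me i = 0"
    and \<mu>: "0 < \<mu>" "\<mu> < 1" and init: "\<bar>Ms 0 i - Me i\<bar> \<le> X0"
    and forcing: "\<And>s. s \<ge> 0 \<Longrightarrow> \<bar>deviation_forcing k xe Me (xs s) (Ms s) i\<bar> \<le> G * X0 * exp (- \<mu> * s)"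
    and "t \<ge> 0"
  shows "\<bar>Ms t i - Me i\<bar> \<le> (1 + G / (1 - \<mu>)) * X0 * exp (- \<mu> * t)"
proof -
  have "((\<lambda>s. Ms s i - Me i) has_real_derivative
      - (k * xs s + 1) * (Ms s i - Me i) + deviation_forcing k xe Me (xs s) (Ms s) i) (at s within {0..})"
    if "s \<ge> 0" for s
    using sol that S_rhs_M_deviation[OF eq] unfolding S_solution_def
    by (auto intro!: derivative_eq_intros)
  moreover have "k * xs s + 1 \<ge> 1" if "s \<ge> 0" for s
    using S_solutionD(2)[OF sol that] \<open>k \<ge> 0\<close> by simp
  ultimately have "\<bar>Ms t i - Me i\<bar> \<le> (\<bar>Ms 0 i - Me i\<bar> + G * X0 / (1 - \<mu>)) * exp (- \<mu> * t)"
    using forcing \<mu> \<open>t \<ge> 0\<close> by (intro linear_ode_exp_decay[where a = "\<lambda>s. k * xs s + 1"]) auto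
  also have "\<dots> \<le> (X0 + G * X0 / (1 - \<mu>)) * exp (- \<mu> * t)"
    using init by (intro mult_right_mono) auto
  finally show ?thesis
    by (simp add: algebra_simps)
qed

text \<open>The deviation of \<open>M\<^sub>i\<close> is damped at rate \<open>k x + 1 \<ge> 1 > \<mu>\<close> and forced by the
  deviations of \<open>x\<close> and of \<open>M\<^sub>i\<^sub>-\<^sub>1\<close>, both of order \<open>exp (-\<mu> t)\<close>; the constants
  \<open>K\<^sub>i = b + a K\<^sub>i\<^sub>-\<^sub>1\<close> of the induction sum to the geometric expression below.\<close>

lemma component_exp_decay:
  fixes k Xb Bm C \<mu> X0 :: real
  assumes sol: "S_solution N k r \<alpha> xs Ms" and "k \<ge> 0"
    and eq: "\<And>i. S_rhs_M k r xe Me i = 0" and Me: "\<And>i. 0 \<le> Me i \<and> Me i \<le> Bm"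
    and \<mu>: "0 < \<mu>" "\<mu> < 1" and "C \<ge> 0"
    and init: "\<And>i. \<bar>Ms 0 i - Me i\<bar> \<le> X0"
    and x_decay: "\<And>s. s \<ge> 0 \<Longrightarrow> \<bar>xs s - xe\<bar> \<le> C * X0 * exp (- \<mu> * s)"
    and x_bound: "\<And>s. s \<ge> 0 \<Longrightarrow> xs s \<le> Xb"
    and "t \<ge> 0"
  shows "\<bar>Ms t i - Me i\<bar> \<le> (1 + k * C * Bm / (1 - \<mu>)) * (\<Sum>j\<le>i. (k * Xb / (1 - \<mu>)) ^ j) * X0 * exp (- \<mu> * t)"
proof -
  define a b where "a = k * Xb / (1 - \<mu>)" and "b = 1 + k * C * Bm / (1 - \<mu>)"
  have "X0 \<ge> 0" using init[of 0] by simp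
  have x_forcing: "\<bar>k * (xs s - xe) * e\<bar> \<le> k * C * Bm * X0 * exp (- \<mu> * s)"
    if "s \<ge> 0" "\<bar>e\<bar> \<le> Bm" for s e
  proof -
    have "\<bar>k * (xs s - xe) * e\<bar> = k * (\<bar>xs s - xe\<bar> * \<bar>e\<bar>)"
      using \<open>k \<ge> 0\<close> by (simp add: abs_mult)
    also have "\<dots> \<le> k * ((C * X0 * exp (- \<mu> * s)) * Bm)"
      using x_decay[OF \<open>s \<ge> 0\<close>] that(2) \<open>k \<ge> 0\<close> \<open>C \<ge> 0\<close> \<open>X0 \<ge> 0\<close>
      by (intro mult_left_mono mult_mono) auto
    finally show ?thesis
      by (simp add: algebra_simps)
  qed
  have "\<forall>t\<ge>0. \<bar>Ms t i - Me i\<bar> \<le> b * (\<Sum>j\<le>i. a ^ j) * X0 * exp (- \<mu> * t)"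
  proof (induction i)
    case 0
    have "\<bar>Ms t 0 - Me 0\<bar> \<le> (1 + k * C * Bm / (1 - \<mu>)) * X0 * exp (- \<mu> * t)" if "t \<ge> 0" for t
    proof (rule deviation_exp_decay_step[OF sol \<open>k \<ge> 0\<close> eq \<mu> init _ that])
      show "\<bar>deviation_forcing k xe Me (xs s) (Ms s) 0\<bar> \<le> k * C * Bm * X0 * exp (- \<mu> * s)"
        if "s \<ge> 0" for s
        using x_forcing[OF that, of "Me 0"] Me[of 0] by (simp add: deviation_forcing_def)
    qed
    thus ?case unfolding b_def by simp
  next
    case (Suc i)
    define K where "K = b * (\<Sum>j\<le>i. a ^ j)"
    have "1 + (k * Xb * K + k * C * Bm) / (1 - \<mu>) = b + a * K"
      unfolding a_def b_def by (simp add: add_divide_distrib algebra_simps)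
    also have "\<dots> = b * (\<Sum>j\<le>Suc i. a ^ j)"
      unfolding K_def by (subst sum.atMost_Suc_shift) (simp add: sum_distrib_left algebra_simps)
    finally have decay_constant: "1 + (k * Xb * K + k * C * Bm) / (1 - \<mu>) = b * (\<Sum>j\<le>Suc i. a ^ j)" .
    have "\<bar>Ms t (Suc i) - Me (Suc i)\<bar> \<le> (1 + (k * Xb * K + k * C * Bm) / (1 - \<mu>)) * X0 * exp (- \<mu> * t)"
      if "t \<ge> 0" for t
    proof (rule deviation_exp_decay_step[OF sol \<open>k \<ge> 0\<close> eq \<mu> init _ that])
      fix s :: real assume "s \<ge> 0"
      have "\<bar>k * xs s * (Ms s i - Me i)\<bar> \<le> k * Xb * (K * X0 * exp (- \<mu> * s))"
        using Suc.IH S_solutionD(2)[OF sol \<open>s \<ge> 0\<close>] x_bound[OF \<open>s \<ge> 0\<close>] \<open>s \<ge> 0\<close> \<open>k \<ge> 0\<close>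
        unfolding K_def by (auto simp: abs_mult mult.assoc intro!: mult_left_mono mult_mono)
      moreover have "\<bar>k * (xs s - xe) * (Me i - Me (Suc i))\<bar> \<le> k * C * Bm * X0 * exp (- \<mu> * s)"
        using Me[of i] Me[of "Suc i"] by (intro x_forcing[OF \<open>s \<ge> 0\<close>]) auto
      ultimately show "\<bar>deviation_forcing k xe Me (xs s) (Ms s) (Suc i)\<bar>
          \<le> (k * Xb * K + k * C * Bm) * X0 * exp (- \<mu> * s)"
        unfolding deviation_forcing_def by (simp add: algebra_simps)
    qed
    thus ?case
      unfolding decay_constant by blast
  qed
  thus ?thesis using \<open>t \<ge> 0\<close> unfolding a_def b_def by blast
qed

lemma reduced_exp_decay:
  assumes stable: "F_locally_exp_stable N k r \<alpha> (reduce N xe Me)"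
    and "N \<ge> 1" and "k \<ge> 0" and Me: "inX Me"
  shows "\<exists>\<delta> C \<mu>. 0 < \<delta> \<and> \<delta> \<le> 1 \<and> C \<ge> 0 \<and> 0 < \<mu> \<and> \<mu> < 1 \<and>
    (\<forall>xs Ms t. S_solution N k r \<alpha> xs Ms \<and> Xdist (xs 0) (Ms 0) xe Me < \<delta> \<and> t \<ge> 0 \<longrightarrow>
      fdist N (reduce N (xs t) (Ms t)) (reduce N xe Me) \<le> C * Xdist (xs 0) (Ms 0) xe Me * exp (- \<mu> * t))"
proof -
  obtain \<delta>F C0 \<gamma> where "\<delta>F > 0" "\<gamma> > 0" and F_decay:
    "\<And>T U. T > 0 \<Longrightarrow> F_solution_on N k r \<alpha> T U \<Longrightarrow> fdist N (U 0) (reduce N xe Me) < \<delta>F \<Longrightarrow>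
       \<forall>t\<in>{0..<T}. fdist N (U t) (reduce N xe Me) \<le> C0 * exp (- \<gamma> * t) * fdist N (U 0) (reduce N xe Me)"
    using stable unfolding F_locally_exp_stable_def by blast
  \<comment> \<open>kept below 1, the damping rate of every \<open>M\<^sub>i\<close>\<close>
  define \<mu> where "\<mu> = min \<gamma> 1 / 2"
  have "fdist N (reduce N (xs t) (Ms t)) (reduce N xe Me) \<le> 4 * \<bar>C0\<bar> * Xdist (xs 0) (Ms 0) xe Me * exp (- \<mu> * t)"
    if sol: "S_solution N k r \<alpha> xs Ms" and small: "Xdist (xs 0) (Ms 0) xe Me < min (\<delta>F / 4) 1"
      and "t \<ge> 0" for xs Ms and t :: real
  proof -
    define X0 where "X0 = Xdist (xs 0) (Ms 0) xe Me"
    define f0 where "f0 = fdist N (reduce N (xs 0) (Ms 0)) (reduce N xe Me)"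
    have "f0 \<ge> 0"
      unfolding f0_def fdist_def by (simp add: sum_nonneg)
    have "f0 \<le> 4 * X0"
      unfolding f0_def X0_def using S_solutionD(1)[OF sol] Me by (simp add: fdist_reduce_le_Xdist)
    hence "f0 < \<delta>F"
      using small unfolding X0_def by simp
    hence "fdist N (reduce N (xs t) (Ms t)) (reduce N xe Me) \<le> C0 * exp (- \<gamma> * t) * f0"
      using F_decay[OF _ reduce_F_solution[OF sol \<open>k \<ge> 0\<close> \<open>N \<ge> 1\<close>], of "t + 1"] \<open>t \<ge> 0\<close>
      unfolding f0_def by simp
    also have "\<dots> \<le> \<bar>C0\<bar> * exp (- \<mu> * t) * (4 * X0)"
    proof (intro mult_mono)
      have "\<mu> \<le> \<gamma>"
        using \<open>\<gamma> > 0\<close> unfolding \<mu>_def by simp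
      thus "exp (- \<gamma> * t) \<le> exp (- \<mu> * t)"
        using \<open>t \<ge> 0\<close> by (simp add: mult_right_mono)
    qed (use \<open>f0 \<ge> 0\<close> \<open>f0 \<le> 4 * X0\<close> in auto)
    finally show ?thesis
      unfolding X0_def by (simp add: algebra_simps)
  qed
  thus ?thesis
    using \<open>\<delta>F > 0\<close> \<open>\<gamma> > 0\<close> unfolding \<mu>_def
    by (intro exI[of _ "min (\<delta>F / 4) 1"] exI[of _ "4 * \<bar>C0\<bar>"] exI[of _ "min \<gamma> 1 / 2"]) auto
qed

lemma Xdist_exp_decay_up_to_tail:
  assumes equilibrium: "S_equilibrium N k r \<alpha> xe Me" and "k \<ge> 0"
    and "\<delta> \<le> 1" and "C \<ge> 0" and \<mu>: "0 < \<mu>" "\<mu> < 1"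
    and reduced: "\<And>xs Ms t. S_solution N k r \<alpha> xs Ms \<Longrightarrow> Xdist (xs 0) (Ms 0) xe Me < \<delta> \<Longrightarrow> t \<ge> 0 \<Longrightarrow>
      fdist N (reduce N (xs t) (Ms t)) (reduce N xe Me) \<le> C * Xdist (xs 0) (Ms 0) xe Me * exp (- \<mu> * t)"
  shows "\<exists>L. \<forall>xs Ms t. S_solution N k r \<alpha> xs Ms \<and> Xdist (xs 0) (Ms 0) xe Me < \<delta> \<and> t \<ge> 0 \<longrightarrow>
      Xdist (xs t) (Ms t) xe Me \<le> L * Xdist (xs 0) (Ms 0) xe Me * exp (- \<mu> * t) + 2 * weighted_tail Me I"
proof -
  have Me: "inX Me" "\<And>i. Me i \<ge> 0" and eq: "\<And>i. S_rhs_M k r xe Me i = 0"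
    using equilibrium unfolding S_equilibrium_def inXplus_def by auto
  define Bm where "Bm = (\<Sum>i. (real i + 1) * \<bar>Me i\<bar>)"
  have Me_bound: "0 \<le> Me i \<and> Me i \<le> Bm" for i
  proof -
    have "Me i \<le> (\<Sum>j\<in>{i}. (real j + 1) * \<bar>Me j\<bar>)"
      using Me(2)[of i] by (simp add: mult_le_cancel_right1)
    also have "\<dots> \<le> Bm"
      unfolding Bm_def using Me(1) unfolding inX_def by (intro sum_le_suminf) auto
    finally show ?thesis using Me(2) by blast
  qed
  define a b where "a = k * (xe + C) / (1 - \<mu>)" and "b = 1 + k * C * Bm / (1 - \<mu>)"
  define K where "K i = b * (\<Sum>j\<le>i. a ^ j)" for i
  have "Xdist (xs t) (Ms t) xe Me \<le> ((real N + 2) * C + 2 * (\<Sum>i<I. (real i + 1) * K i))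
      * Xdist (xs 0) (Ms 0) xe Me * exp (- \<mu> * t) + 2 * weighted_tail Me I"
    if sol: "S_solution N k r \<alpha> xs Ms" and small: "Xdist (xs 0) (Ms 0) xe Me < \<delta>" and "t \<ge> 0"
    for xs Ms and t :: real
  proof -
    define X0 where "X0 = Xdist (xs 0) (Ms 0) xe Me"
    define E where "E s = X0 * exp (- \<mu> * s)" for s
    have fd: "fdist N (reduce N (xs s) (Ms s)) (reduce N xe Me) \<le> C * E s" if "s \<ge> 0" for s
      using reduced[OF sol small that] unfolding E_def X0_def by (simp add: mult.assoc)
    have x_decay: "\<bar>xs s - xe\<bar> \<le> C * X0 * exp (- \<mu> * s)" if "s \<ge> 0" for s
      using order_trans[OF abs_diff_le_fdist_reduce[OF S_solutionD(1)[OF sol that] Me(1)] fd[OF that]]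
      unfolding E_def by (simp add: mult.assoc)
    have "X0 \<le> 1" "X0 \<ge> 0"
      using small \<open>\<delta> \<le> 1\<close> Xdist_nonneg[OF S_solutionD(1)[OF sol] Me(1)] unfolding X0_def by auto
    hence "X0 * exp (- \<mu> * s) \<le> 1" if "s \<ge> 0" for s
      using \<mu> that by (intro mult_le_one) auto
    hence "C * X0 * exp (- \<mu> * s) \<le> C" if "s \<ge> 0" for s
      using mult_left_le[OF _ \<open>C \<ge> 0\<close>] that by (simp add: mult.assoc)
    hence x_bound: "xs s \<le> xe + C" if "s \<ge> 0" for s
      using x_decay[OF that] that by force
    have comp: "\<bar>Ms t i - Me i\<bar> \<le> K i * E t" for i
      using component_exp_decay[OF sol \<open>k \<ge> 0\<close> eq Me_bound \<mu> \<open>C \<ge> 0\<close> _ x_decay x_bound \<open>t \<ge> 0\<close>]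
        abs_component_le_Xdist[OF S_solutionD(1)[OF sol] Me(1)]
      unfolding K_def E_def a_def b_def X0_def by (simp add: mult.assoc)
    have "Xdist (xs t) (Ms t) xe Me \<le> (real N + 2) * fdist N (reduce N (xs t) (Ms t)) (reduce N xe Me)
        + 2 * (\<Sum>i<I. (real i + 1) * \<bar>Ms t i - Me i\<bar>) + 2 * weighted_tail Me I"
      using S_solutionD[OF sol \<open>t \<ge> 0\<close>] Me(1) by (intro Xdist_le_fdist_reduce) auto
    also have "\<dots> \<le> (real N + 2) * (C * E t) + 2 * (\<Sum>i<I. (real i + 1) * (K i * E t)) + 2 * weighted_tail Me I"
      using fd[OF \<open>t \<ge> 0\<close>] comp by (intro add_mono mult_left_mono sum_mono) auto
    also have "\<dots> = ((real N + 2) * C + 2 * (\<Sum>i<I. (real i + 1) * K i)) * X0 * exp (- \<mu> * t)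
        + 2 * weighted_tail Me I"
      unfolding E_def by (simp add: algebra_simps sum_distrib_left sum_distrib_right)
    finally show ?thesis
      unfolding X0_def .
  qed
  thus ?thesis by blast
qed

lemma S_locally_asymptotically_stableI:
  assumes "\<delta> > 0" and "\<mu> > 0" and tail_lim: "tail \<longlonglongrightarrow> 0"
    and nonneg: "\<And>xs Ms t. S_solution N k r \<alpha> xs Ms \<Longrightarrow> t \<ge> 0 \<Longrightarrow> 0 \<le> Xdist (xs t) (Ms t) xe Me"
    and decay: "\<And>I. \<exists>L. \<forall>xs Ms t. S_solution N k r \<alpha> xs Ms \<and> Xdist (xs 0) (Ms 0) xe Me < \<delta> \<and> t \<ge> 0
      \<longrightarrow> Xdist (xs t) (Ms t) xe Me \<le> L * Xdist (xs 0) (Ms 0) xe Me * exp (- \<mu> * t) + tail I"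
  shows "S_locally_asymptotically_stable N k r \<alpha> xe Me"
proof -
  have small_tail: "\<exists>I. tail I < \<epsilon> / 2" if "\<epsilon> > 0" for \<epsilon> :: real
  proof -
    obtain I where "\<forall>n\<ge>I. tail n < \<epsilon> / 2"
      using order_tendstoD(2)[OF tail_lim, of "\<epsilon> / 2"] \<open>\<epsilon> > 0\<close> unfolding eventually_sequentially by auto
    thus ?thesis by blast
  qed
  have stable: "\<exists>\<delta>'>0. \<forall>xs Ms. S_solution N k r \<alpha> xs Ms \<and> Xdist (xs 0) (Ms 0) xe Me < \<delta>' \<longrightarrow>
      (\<forall>t\<ge>0. Xdist (xs t) (Ms t) xe Me < \<epsilon>)" if \<epsilon>: "\<epsilon> > 0" for \<epsilon> :: real
  proof -
    obtain I L where I: "tail I < \<epsilon> / 2" and L: "\<forall>xs Ms t. S_solution N k r \<alpha> xs Ms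
        \<and> Xdist (xs 0) (Ms 0) xe Me < \<delta> \<and> t \<ge> 0
        \<longrightarrow> Xdist (xs t) (Ms t) xe Me \<le> L * Xdist (xs 0) (Ms 0) xe Me * exp (- \<mu> * t) + tail I"
      using small_tail[OF \<epsilon>] decay by blast
    define \<delta>' where "\<delta>' = min \<delta> (\<epsilon> / (2 * (\<bar>L\<bar> + 1)))"
    have "\<delta>' > 0" unfolding \<delta>'_def using \<open>\<delta> > 0\<close> \<open>\<epsilon> > 0\<close> by simp
    moreover have "Xdist (xs t) (Ms t) xe Me < \<epsilon>"
      if sol: "S_solution N k r \<alpha> xs Ms" and small: "Xdist (xs 0) (Ms 0) xe Me < \<delta>'" and "t \<ge> 0"
      for xs Ms t
    proof -
      define X0 where "X0 = Xdist (xs 0) (Ms 0) xe Me"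
      have "0 \<le> X0" "X0 < \<delta>" "X0 \<le> \<epsilon> / (2 * (\<bar>L\<bar> + 1))"
        using nonneg[OF sol, of 0] small unfolding X0_def \<delta>'_def by auto
      have "L * X0 * exp (- \<mu> * t) \<le> \<bar>L\<bar> * X0 * 1"
        using \<open>0 \<le> X0\<close> \<open>\<mu> > 0\<close> \<open>t \<ge> 0\<close> by (intro mult_mono) auto
      also have "\<dots> \<le> \<bar>L\<bar> * (\<epsilon> / (2 * (\<bar>L\<bar> + 1)))"
        using mult_left_mono[OF \<open>X0 \<le> _\<close> abs_ge_zero] by simp
      also have "\<dots> < \<epsilon> / 2"
        using \<open>\<epsilon> > 0\<close> by (simp add: field_simps)
      finally show ?thesis
        using L I sol \<open>X0 < \<delta>\<close> \<open>t \<ge> 0\<close> unfolding X0_def by fastforce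
    qed
    ultimately show ?thesis by blast
  qed
  have attractive: "((\<lambda>t. Xdist (xs t) (Ms t) xe Me) \<longlongrightarrow> 0) at_top"
    if sol: "S_solution N k r \<alpha> xs Ms" and small: "Xdist (xs 0) (Ms 0) xe Me < \<delta>" for xs Ms
  proof (rule tendstoI)
    fix \<epsilon> :: real assume "\<epsilon> > 0"
    obtain I L where I: "tail I < \<epsilon> / 2" and L: "\<And>t. t \<ge> 0 \<Longrightarrow>
        Xdist (xs t) (Ms t) xe Me \<le> L * Xdist (xs 0) (Ms 0) xe Me * exp (- \<mu> * t) + tail I"
      using small_tail[OF \<open>\<epsilon> > 0\<close>] decay sol small by blast
    have "LIM t at_top. \<mu> * t :> at_top"
      by (rule filterlim_tendsto_pos_mult_at_top[OF tendsto_const \<open>\<mu> > 0\<close> filterlim_ident])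
    hence "LIM t at_top. - \<mu> * t :> at_bot"
      by (simp add: filterlim_uminus_at_bot)
    hence "((\<lambda>t. exp (- \<mu> * t)) \<longlongrightarrow> 0) at_top"
      by (rule filterlim_compose[OF exp_at_bot])
    hence "((\<lambda>t. L * Xdist (xs 0) (Ms 0) xe Me * exp (- \<mu> * t)) \<longlongrightarrow> 0) at_top"
      by (rule tendsto_mult_right_zero)
    hence "\<forall>\<^sub>F t in at_top. L * Xdist (xs 0) (Ms 0) xe Me * exp (- \<mu> * t) < \<epsilon> / 2"
      using \<open>\<epsilon> > 0\<close> by (intro order_tendstoD) auto
    moreover have "\<forall>\<^sub>F t in at_top. t \<ge> (0::real)"
      by (rule eventually_ge_at_top)
    ultimately show "\<forall>\<^sub>F t in at_top. dist (Xdist (xs t) (Ms t) xe Me) 0 < \<epsilon>"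
    proof eventually_elim
      case (elim t)
      thus ?case using L[of t] I nonneg[OF sol, of t] by simp
    qed
  qed
  show ?thesis
    unfolding S_locally_asymptotically_stable_def using stable attractive \<open>\<delta> > 0\<close> by blast
qed

theorem theorem4p1:
  fixes N :: nat and k r \<alpha> xe :: real and Me :: "nat \<Rightarrow> real"
  assumes "N \<ge> 1" and "k > 0" and "r > 0" and "\<alpha> > 0"
    and "\<alpha> / r < mustar N"
    and "S_equilibrium N k r \<alpha> xe Me"
    and "F_locally_exp_stable N k r \<alpha> (reduce N xe Me)"
  shows "S_locally_asymptotically_stable N k r \<alpha> xe Me"
proof -
  \<comment> \<open>\<open>\<alpha> / r < mustar N\<close> only guarantees that equilibria exist.\<close>
  have Me: "inX Me"
    using assms(6) unfolding S_equilibrium_def inXplus_def by simp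
  obtain \<delta> C \<mu> where "0 < \<delta>" "\<delta> \<le> 1" "C \<ge> 0" "0 < \<mu>" "\<mu> < 1" and reduced:
    "\<forall>xs Ms t. S_solution N k r \<alpha> xs Ms \<and> Xdist (xs 0) (Ms 0) xe Me < \<delta> \<and> t \<ge> 0 \<longrightarrow>
      fdist N (reduce N (xs t) (Ms t)) (reduce N xe Me) \<le> C * Xdist (xs 0) (Ms 0) xe Me * exp (- \<mu> * t)"
    using reduced_exp_decay[OF assms(7,1) less_imp_le[OF assms(2)] Me] by blast
  show ?thesis
  proof (rule S_locally_asymptotically_stableI[OF \<open>0 < \<delta>\<close> \<open>0 < \<mu>\<close>])
    show "(\<lambda>I. 2 * weighted_tail Me I) \<longlonglongrightarrow> 0"
      using tendsto_mult_right_zero[OF weighted_tail_tendsto_0[OF Me]] by simp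
    show "0 \<le> Xdist (xs t) (Ms t) xe Me" if "S_solution N k r \<alpha> xs Ms" "t \<ge> 0" for xs Ms t
      using Xdist_nonneg[OF S_solutionD(1)[OF that] Me] .
    show "\<exists>L. \<forall>xs Ms t. S_solution N k r \<alpha> xs Ms \<and> Xdist (xs 0) (Ms 0) xe Me < \<delta> \<and> t \<ge> 0 \<longrightarrow>
        Xdist (xs t) (Ms t) xe Me \<le> L * Xdist (xs 0) (Ms 0) xe Me * exp (- \<mu> * t) + 2 * weighted_tail Me I"
      for I
      using reduced by (intro Xdist_exp_decay_up_to_tail[OF assms(6) less_imp_le[OF assms(2)]
          \<open>\<delta> \<le> 1\<close> \<open>C \<ge> 0\<close> \<open>0 < \<mu>\<close> \<open>\<mu> < 1\<close>]) blast
  qed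
qed

end
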